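(* Let $X_t=(Z_t,S_t,P_t)$ be the agent state at time $t$, let $\tilde{A}_t$ be a random action sampled from a distribution $\nu$ over the finite action set $\mathcal{A}$, let $Q_\dagger$ be a random function mapping (history, action) pairs to $\mathbb{R}^n$, let $\tilde{Y}_{t+1}=Q_\dagger(H_t,\tilde{A}_t)+W_{t+1}$ where $W_{t+1}$ is zero-mean random noise in $\mathbb{R}^n$, and let $\pi_\chi$ be a target policy. If each component of $Q_\dagger$ has span at most $M_1$ and each component of $W_{t+1}$ has span at most $M_2$, then $$\mathbb{I}(\pi_\chi(\cdot|S_t); \tilde{A}_t, \tilde{Y}_{t+1} \,|\, X_t=X_t) \geq \frac{2}{n(M_1+M_2)^2} \mathrm{tr}\left(\mathrm{Cov}\left[\mathbb{E}\left[Q_\dagger(H_t, \tilde A_t) \,|\, X_t, \pi_\chi(\cdot|S_t)\right] \,\big|\, X_t\right]\right).$$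
   Context: All objects are random variables on a common probability space describing an agent interacting with an unknown (random) environment: $H_t$ is the history up to time $t$; the agent state $X_t$ consists of algorithmic state $Z_t$, aleatoric state $S_t$ and epistemic state $P_t$; $\tilde{A}_t$ is drawn from $\nu$ (which depends only on $X_t$) using randomness independent of everything else given $X_t$. $Q_\dagger$ is a vector of $n$ general value functions (depending on the unknown environment), and $\pi_\chi$ is a (random) policy, with $\pi_\chi(\cdot|S_t)$ its action distribution at $S_t$. The span of a real random variable $Y$ is $\mathrm{ess\,sup}\,Y-\mathrm{ess\,inf}\,Y$. $\mathbb{I}(\cdot;\cdot|X_t=X_t)$ is mutual information conditioned on the realized value of $X_t$; the inequality is between functions of $X_t$. *)

theory Defs
  imports "HOL-Probability.Probability"
begin

definition span_rv :: "'w measure \<Rightarrow> ('w \<Rightarrow> real) \<Rightarrow> ereal" where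
  "span_rv M Y = esssup M (\<lambda>w. ereal (Y w)) + esssup M (\<lambda>w. - ereal (Y w))"

definition fin_partitions :: "'x measure \<Rightarrow> 'x set set set" where
  "fin_partitions S = {P. finite P \<and> P \<subseteq> sets S \<and> disjoint P \<and> \<Union>P = space S}"

text \<open>Mutual information (in nats) between random elements X and Y of a probability
  space M, in the general (Dobrushin / Gelfand--Yaglom--Perez) sense: supremum over
  finite measurable partitions of the mutual information of the quantized variables.\<close>
definition mutual_info ::
  "'w measure \<Rightarrow> 'x measure \<Rightarrow> ('w \<Rightarrow> 'x) \<Rightarrow> 'y measure \<Rightarrow> ('w \<Rightarrow> 'y) \<Rightarrow> ereal" where
  "mutual_info M SX X SY Y =
     (SUP PQ \<in> fin_partitions SX \<times> fin_partitions SY.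
        ereal (\<Sum>A\<in>fst PQ. \<Sum>B\<in>snd PQ.
          (let pab = measure M {w \<in> space M. X w \<in> A \<and> Y w \<in> B};
               pa = measure M {w \<in> space M. X w \<in> A};
               pb = measure M {w \<in> space M. Y w \<in> B}
           in if pab = 0 then 0 else pab * ln (pab / (pa * pb)))))"

end

theory Submission
  imports Defs
begin

(*
  Write Y_i = Q_i + W_i for the i-th coordinate of the observation.  The noise W_i is centred
  given (Pi, A, Q), and sigma(Pi) is coarser, so by the tower property E[Q_i | Pi] = E[Y_i | Pi];
  moreover Y_i ranges over an interval of length c = M1 + M2.  Hence it suffices to prove
  Var E[f(Y) | X] <= c^2/2 * I(X; Y) whenever f(Y) ranges over an interval of length c, and to
  sum over the n coordinates.

  Quantizing both f(Y) and E[f(Y) | X] on a grid of mesh d reduces this, up to an error O(d),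
  to finite partitions: there the variance of the cell-wise conditional means is an average of
  squared mean differences (E_q v - E_r v)^2, each at most c^2/2 * KL(q || r) by the
  Donsker-Varadhan inequality combined with Hoeffding's lemma, and the average of these KL
  divergences is the quantized mutual information, which is at most I(X; Y).
*)

section \<open>Finite distributions\<close>

definition kl_finite :: "'j set \<Rightarrow> ('j \<Rightarrow> real) \<Rightarrow> ('j \<Rightarrow> real) \<Rightarrow> real" where
  "kl_finite J q r = (\<Sum>j\<in>J. if q j = 0 then 0 else q j * ln (q j / r j))"

(* The marginals pa and pb are parameters, so that for partitions this is literally the
   quantity whose supremum defines mutual_info. *)
definition mutual_info_finite ::
  "'i set \<Rightarrow> 'j set \<Rightarrow> ('i \<Rightarrow> 'j \<Rightarrow> real) \<Rightarrow> ('i \<Rightarrow> real) \<Rightarrow> ('j \<Rightarrow> real) \<Rightarrow> real" where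
  "mutual_info_finite I J p pa pb =
     (\<Sum>i\<in>I. \<Sum>j\<in>J. if p i j = 0 then 0 else p i j * ln (p i j / (pa i * pb j)))"

lemma hoeffding_lemma_finite:
  fixes r v :: "'j \<Rightarrow> real"
  assumes J: "finite J" and r_nonneg: "\<And>j. j \<in> J \<Longrightarrow> 0 \<le> r j" and r_sum: "(\<Sum>j\<in>J. r j) = 1"
    and v: "\<And>j. j \<in> J \<Longrightarrow> v j \<in> {a..b}"
  shows "(\<Sum>j\<in>J. r j * exp (l * (v j - (\<Sum>k\<in>J. r k * v k)))) \<le> exp (l\<^sup>2 * (b - a)\<^sup>2 / 8)"
proof -
  define R where "R = point_measure J (\<lambda>j. ennreal (r j))"
  interpret prob_space R
    unfolding R_def using r_nonneg r_sum by (intro prob_space_point_measure[OF J]) (auto simp: sum_ennreal)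
  have E: "expectation u = (\<Sum>k\<in>J. r k * u k)" for u
    unfolding R_def using lebesgue_integral_point_measure_finite[OF J r_nonneg, where g = u] by simp
  have hoeffding: "(\<Sum>j\<in>J. r j * exp (l * (u j - (\<Sum>k\<in>J. r k * u k)))) \<le> exp (l\<^sup>2 * (b' - a')\<^sup>2 / 8)"
    if l: "0 < l" and u: "\<And>j. j \<in> J \<Longrightarrow> u j \<in> {a'..b'}" for l u a' b'
  proof -
    interpret interval_bounded_random_variable R u a' b'
    proof
      show "AE x in R. u x \<in> {a'..b'}" unfolding R_def AE_point_measure using u by blast
    qed (simp add: R_def)
    have "(\<integral>\<^sup>+ j. exp (l * (u j - expectation u)) \<partial>R)
          = (\<Sum>j\<in>J. ennreal (r j) * exp (l * (u j - expectation u)))"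
      unfolding R_def by (rule nn_integral_point_measure_finite[OF J])
    also have "\<dots> = ennreal (\<Sum>j\<in>J. r j * exp (l * (u j - expectation u)))"
      using r_nonneg by (simp add: ennreal_mult[symmetric] sum_ennreal)
    finally show ?thesis
      using Hoeffdings_lemma_nn_integral[OF l] E by simp
  qed
  consider "0 < l" | "l = 0" | "l < 0" by linarith
  then show ?thesis
  proof cases
    case 1
    then show ?thesis using hoeffding v by blast
  next
    case 2
    then show ?thesis using r_sum by simp
  next
    case 3
    have "(\<Sum>j\<in>J. r j * exp (- l * (- v j - (\<Sum>k\<in>J. r k * - v k)))) \<le> exp ((- l)\<^sup>2 * (- a - - b)\<^sup>2 / 8)"
      using 3 v by (intro hoeffding) auto
    then show ?thesis by (simp add: sum_negf algebra_simps)
  qed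
qed

lemma donsker_varadhan_finite:
  fixes q r h :: "'j \<Rightarrow> real"
  assumes J: "finite J" and q_nonneg: "\<And>j. j \<in> J \<Longrightarrow> 0 \<le> q j" and r_nonneg: "\<And>j. j \<in> J \<Longrightarrow> 0 \<le> r j"
    and q_sum: "(\<Sum>j\<in>J. q j) = 1" and r_sum: "(\<Sum>j\<in>J. r j) = 1"
    and q_abs_cont: "\<And>j. j \<in> J \<Longrightarrow> 0 < q j \<Longrightarrow> 0 < r j"
  shows "(\<Sum>j\<in>J. q j * h j) \<le> kl_finite J q r + ln (\<Sum>j\<in>J. r j * exp (h j))"
proof -
  define Z where "Z = (\<Sum>j\<in>J. r j * exp (h j))"
  obtain j0 where j0: "j0 \<in> J" "r j0 \<noteq> 0"
    using r_sum by (metis sum.neutral zero_neq_one)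
  have "0 < r j0 * exp (h j0)" using j0 r_nonneg[of j0] by simp
  also have "\<dots> \<le> Z" unfolding Z_def
    using J j0 r_nonneg by (intro member_le_sum) auto
  finally have Z_pos: "0 < Z" .
  \<comment> \<open>Termwise \<open>ln x \<le> x - 1\<close> with \<open>x = r j exp (h j) / (q j Z)\<close>.\<close>
  have termwise: "q j * h j - (if q j = 0 then 0 else q j * ln (q j / r j)) - q j * ln Z
      \<le> r j * exp (h j) / Z - q j" if j: "j \<in> J" for j
  proof (cases "q j = 0")
    case True
    then show ?thesis using r_nonneg[OF j] Z_pos by simp
  next
    case False
    with q_nonneg[OF j] have q_pos: "0 < q j" by simp
    have r_pos: "0 < r j" using q_abs_cont[OF j q_pos] .
    have "q j * h j - q j * ln (q j / r j) - q j * ln Z = q j * ln (r j * exp (h j) / (q j * Z))"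
      using q_pos r_pos Z_pos by (simp add: ln_div ln_mult algebra_simps)
    also have "\<dots> \<le> q j * (r j * exp (h j) / (q j * Z) - 1)"
      using q_pos r_pos Z_pos by (intro mult_left_mono ln_le_minus_one) auto
    also have "\<dots> = r j * exp (h j) / Z - q j" using q_pos by (simp add: field_simps)
    finally show ?thesis using False by simp
  qed
  have "(\<Sum>j\<in>J. q j * h j - (if q j = 0 then 0 else q j * ln (q j / r j)) - q j * ln Z)
        \<le> (\<Sum>j\<in>J. r j * exp (h j) / Z - q j)"
    by (rule sum_mono) (use termwise in auto)
  also have "\<dots> = 0" using Z_pos by (simp add: sum_subtractf q_sum Z_def flip: sum_divide_distrib)
  finally show ?thesis
    by (simp add: kl_finite_def Z_def sum_subtractf q_sum flip: sum_distrib_right)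
qed

lemma transport_ineq_finite:
  fixes q r v :: "'j \<Rightarrow> real"
  assumes J: "finite J" and q_nonneg: "\<And>j. j \<in> J \<Longrightarrow> 0 \<le> q j" and r_nonneg: "\<And>j. j \<in> J \<Longrightarrow> 0 \<le> r j"
    and q_sum: "(\<Sum>j\<in>J. q j) = 1" and r_sum: "(\<Sum>j\<in>J. r j) = 1"
    and q_abs_cont: "\<And>j. j \<in> J \<Longrightarrow> 0 < q j \<Longrightarrow> 0 < r j"
    and v: "\<And>j. j \<in> J \<Longrightarrow> v j \<in> {lo..lo + c}" and c: "0 < c"
  shows "((\<Sum>j\<in>J. q j * v j) - (\<Sum>j\<in>J. r j * v j))\<^sup>2 \<le> c\<^sup>2 / 2 * kl_finite J q r"
proof -
  define m where "m = (\<Sum>j\<in>J. r j * v j)"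
  define d where "d = (\<Sum>j\<in>J. q j * v j) - m"
  have linear_bound: "l * d \<le> kl_finite J q r + l\<^sup>2 * c\<^sup>2 / 8" for l
  proof -
    have sum_pos: "0 < (\<Sum>j\<in>J. r j * exp (l * (v j - m)))"
    proof -
      obtain j0 where j0: "j0 \<in> J" "r j0 \<noteq> 0" using r_sum by (metis sum.neutral zero_neq_one)
      have "0 < r j0 * exp (l * (v j0 - m))" using j0 r_nonneg[of j0] by simp
      also have "\<dots> \<le> (\<Sum>j\<in>J. r j * exp (l * (v j - m)))"
        using J j0 r_nonneg by (intro member_le_sum) auto
      finally show ?thesis .
    qed
    have "(\<Sum>j\<in>J. r j * exp (l * (v j - m))) \<le> exp (l\<^sup>2 * ((lo + c) - lo)\<^sup>2 / 8)"
      unfolding m_def using J r_nonneg r_sum v by (rule hoeffding_lemma_finite)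
    with sum_pos have "ln (\<Sum>j\<in>J. r j * exp (l * (v j - m))) \<le> ln (exp (l\<^sup>2 * c\<^sup>2 / 8))"
      by (subst ln_le_cancel_iff) auto
    then have hoeffding: "ln (\<Sum>j\<in>J. r j * exp (l * (v j - m))) \<le> l\<^sup>2 * c\<^sup>2 / 8"
      by simp
    have "(\<Sum>j\<in>J. r j * exp (l * v j)) = exp (l * m) * (\<Sum>j\<in>J. r j * exp (l * (v j - m)))"
      by (simp add: sum_distrib_left right_diff_distrib exp_diff field_simps)
    with sum_pos have "ln (\<Sum>j\<in>J. r j * exp (l * v j)) = l * m + ln (\<Sum>j\<in>J. r j * exp (l * (v j - m)))"
      by (simp add: ln_mult)
    moreover have "(\<Sum>j\<in>J. q j * (l * v j)) \<le> kl_finite J q r + ln (\<Sum>j\<in>J. r j * exp (l * v j))"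
      using J q_nonneg r_nonneg q_sum r_sum q_abs_cont by (rule donsker_varadhan_finite)
    moreover have "(\<Sum>j\<in>J. q j * (l * v j)) = l * (d + m)"
      by (simp add: d_def sum_distrib_left algebra_simps)
    ultimately show ?thesis using hoeffding by (simp add: algebra_simps)
  qed
  \<comment> \<open>The minimising choice \<open>l = 4 d / c\<^sup>2\<close>.\<close>
  have "4 * d\<^sup>2 / c\<^sup>2 \<le> kl_finite J q r + (4 * d / c\<^sup>2)\<^sup>2 * c\<^sup>2 / 8"
    using linear_bound[of "4 * d / c\<^sup>2"] by (simp add: power2_eq_square)
  also have "(4 * d / c\<^sup>2)\<^sup>2 * c\<^sup>2 / 8 = 2 * d\<^sup>2 / c\<^sup>2"
    using c by (simp add: field_simps power2_eq_square)
  finally have "d\<^sup>2 \<le> c\<^sup>2 / 2 * kl_finite J q r"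
    using c by (simp add: field_simps)
  then show ?thesis by (simp add: d_def m_def)
qed

lemma cond_mean_variance_le_mutual_info_finite:
  fixes p :: "'i \<Rightarrow> 'j \<Rightarrow> real" and pa :: "'i \<Rightarrow> real" and pb v :: "'j \<Rightarrow> real"
  assumes I: "finite I" and J: "finite J"
    and p_nonneg: "\<And>i j. i \<in> I \<Longrightarrow> j \<in> J \<Longrightarrow> 0 \<le> p i j"
    and pa: "\<And>i. i \<in> I \<Longrightarrow> pa i = (\<Sum>j\<in>J. p i j)"
    and pb: "\<And>j. j \<in> J \<Longrightarrow> pb j = (\<Sum>i\<in>I. p i j)"
    and pa_sum: "(\<Sum>i\<in>I. pa i) = 1"
    and v: "\<And>j. j \<in> J \<Longrightarrow> v j \<in> {lo..lo + c}" and c: "0 < c"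
  shows "(\<Sum>i\<in>I. pa i * ((\<Sum>j\<in>J. p i j * v j) / pa i - (\<Sum>j\<in>J. pb j * v j))\<^sup>2)
         \<le> c\<^sup>2 / 2 * mutual_info_finite I J p pa pb"
proof -
  have pb_nonneg: "0 \<le> pb j" if "j \<in> J" for j
    using pb[OF that] p_nonneg that by (simp add: sum_nonneg)
  have pb_sum: "(\<Sum>j\<in>J. pb j) = 1"
    using pa_sum by (simp add: pa pb sum.swap[of _ J])
  have row: "pa i * ((\<Sum>j\<in>J. p i j * v j) / pa i - (\<Sum>j\<in>J. pb j * v j))\<^sup>2
      \<le> c\<^sup>2 / 2 * (\<Sum>j\<in>J. if p i j = 0 then 0 else p i j * ln (p i j / (pa i * pb j)))"
    if i: "i \<in> I" for i
  proof (cases "pa i = 0")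
    case True
    then have "\<forall>j\<in>J. p i j = 0" using pa[OF i] p_nonneg[OF i] J by (simp add: sum_nonneg_eq_0_iff)
    then show ?thesis using True by simp
  next
    case False
    with pa[OF i] p_nonneg[OF i] have pa_pos: "0 < pa i"
      by (metis less_eq_real_def sum_nonneg)
    define q where "q j = p i j / pa i" for j
    have q_abs_cont: "0 < pb j" if "j \<in> J" "0 < q j" for j
    proof -
      have "0 < p i j" using that pa_pos by (simp add: q_def zero_less_divide_iff)
      also have "p i j \<le> pb j" unfolding pb[OF that(1)]
        using I i p_nonneg that by (intro member_le_sum) auto
      finally show ?thesis .
    qed
    have transport: "((\<Sum>j\<in>J. q j * v j) - (\<Sum>j\<in>J. pb j * v j))\<^sup>2 \<le> c\<^sup>2 / 2 * kl_finite J q pb"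
      using pa_pos p_nonneg[OF i] pa[OF i]
      by (intro transport_ineq_finite[OF J _ pb_nonneg _ pb_sum q_abs_cont v c])
        (auto simp: q_def simp flip: sum_divide_distrib)
    have q_mean: "(\<Sum>j\<in>J. q j * v j) = (\<Sum>j\<in>J. p i j * v j) / pa i"
      by (simp add: q_def sum_divide_distrib)
    have "pa i * ((\<Sum>j\<in>J. p i j * v j) / pa i - (\<Sum>j\<in>J. pb j * v j))\<^sup>2
        \<le> c\<^sup>2 / 2 * (pa i * kl_finite J q pb)"
      using mult_left_mono[OF transport, of "pa i"] pa_pos q_mean by (simp add: algebra_simps)
    also have "pa i * kl_finite J q pb
        = (\<Sum>j\<in>J. if p i j = 0 then 0 else p i j * ln (p i j / (pa i * pb j)))"
      unfolding kl_finite_def sum_distrib_left by (rule sum.cong) (use pa_pos in \<open>auto simp: q_def\<close>)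
    finally show ?thesis .
  qed
  have "(\<Sum>i\<in>I. pa i * ((\<Sum>j\<in>J. p i j * v j) / pa i - (\<Sum>j\<in>J. pb j * v j))\<^sup>2)
      \<le> (\<Sum>i\<in>I. c\<^sup>2 / 2 * (\<Sum>j\<in>J. if p i j = 0 then 0 else p i j * ln (p i j / (pa i * pb j))))"
    by (rule sum_mono) (rule row)
  then show ?thesis by (simp add: mutual_info_finite_def sum_distrib_left)
qed

section \<open>Finite measurable partitions\<close>

lemma sets_Collect_mem:
  assumes "Y \<in> M \<rightarrow>\<^sub>M S" and "B \<in> sets S"
  shows "{w \<in> space M. Y w \<in> B} \<in> sets M"
  using measurable_sets[OF assms] by (simp add: vimage_def Int_def conj_commute)

lemma sets_Collect_conj_mem:
  assumes "{w \<in> space M. Q w} \<in> sets M" and "Y \<in> M \<rightarrow>\<^sub>M S" and "B \<in> sets S"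
  shows "{w \<in> space M. Q w \<and> Y w \<in> B} \<in> sets M"
proof -
  have "{w \<in> space M. Q w \<and> Y w \<in> B} = {w \<in> space M. Q w} \<inter> {w \<in> space M. Y w \<in> B}" by auto
  then show ?thesis using sets.Int[OF assms(1) sets_Collect_mem[OF assms(2,3)]] by simp
qed

lemma fin_partitions_ex1_block:
  assumes P: "P \<in> fin_partitions S" and x: "x \<in> space S"
  shows "\<exists>!A. A \<in> P \<and> x \<in> A"
proof -
  from P x obtain A where A: "A \<in> P" "x \<in> A" by (auto simp: fin_partitions_def)
  have "disjoint P" using P by (simp add: fin_partitions_def)
  then have "B = A" if "B \<in> P" "x \<in> B" for B
    using A that unfolding disjoint_def by blast
  with A show ?thesis by blast
qed

lemma space_in_fin_partitions: "{space S} \<in> fin_partitions S"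
  by (simp add: fin_partitions_def)

lemma level_sets_in_fin_partitions:
  assumes k: "k \<in> S \<rightarrow>\<^sub>M count_space UNIV" and N: "\<And>x. x \<in> space S \<Longrightarrow> k x < (N::nat)"
  shows "(\<lambda>i. {x \<in> space S. k x = i}) ` {..<N} \<in> fin_partitions S"
proof -
  have "{x \<in> space S. k x = i} \<in> sets S" for i
    using sets_Collect_mem[OF k, of "{i}"] by simp
  then show ?thesis
    using N unfolding fin_partitions_def disjoint_def by auto
qed

lemma fin_partition_refining_vimage:
  fixes N :: nat
  assumes X: "X \<in> M \<rightarrow>\<^sub>M SX"
    and L: "\<And>k. k < N \<Longrightarrow> L k \<in> sets (vimage_algebra (space M) X SX)"
    and cover: "space M \<subseteq> (\<Union>k<N. L k)" and N: "0 < N"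
  shows "\<exists>P \<in> fin_partitions SX. \<forall>A\<in>P. \<exists>k<N. {w \<in> space M. X w \<in> A} \<subseteq> L k"
proof -
  have "\<exists>T. T \<in> sets SX \<and> L k = X -` T \<inter> space M" if "k < N" for k
  proof -
    have "X \<in> space M \<rightarrow> space SX" using measurable_space[OF X] by auto
    with L[OF that] show ?thesis by (auto simp: sets_vimage_algebra2)
  qed
  then obtain T where T: "\<And>k. k < N \<Longrightarrow> T k \<in> sets SX" "\<And>k. k < N \<Longrightarrow> L k = X -` T k \<inter> space M"
    by metis
  define first where "first x = (LEAST k. k < N \<and> x \<in> T k)" for x
  \<comment> \<open>Points lying in no \<open>T i\<close> go to block \<open>0\<close>; by \<open>cover\<close> no \<open>X w\<close> is such a point.\<close>
  define k where "k x = (if \<exists>i<N. x \<in> T i then first x else 0)" for x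
  have first: "first x < N \<and> x \<in> T (first x)" if "\<exists>i<N. x \<in> T i" for x
    unfolding first_def using that by (rule LeastI_ex)
  have "k \<in> SX \<rightarrow>\<^sub>M count_space UNIV"
    unfolding k_def first_def using T(1) by measurable
  then have partition: "(\<lambda>i. {x \<in> space SX. k x = i}) ` {..<N} \<in> fin_partitions SX"
    by (rule level_sets_in_fin_partitions) (use first N in \<open>auto simp: k_def\<close>)
  have refines: "{w \<in> space M. X w \<in> {x \<in> space SX. k x = i}} \<subseteq> L i" for i
  proof
    fix w assume "w \<in> {w \<in> space M. X w \<in> {x \<in> space SX. k x = i}}"
    then have w: "w \<in> space M" and i: "k (X w) = i" by auto
    with cover T(2) have ex: "\<exists>i<N. X w \<in> T i" by blast
    with first[OF ex] T(2) w i show "w \<in> L i" by (auto simp: k_def)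
  qed
  show ?thesis
  proof (rule bexI[OF _ partition], rule ballI)
    fix A assume "A \<in> (\<lambda>i. {x \<in> space SX. k x = i}) ` {..<N}"
    then obtain i where "i < N" "A = {x \<in> space SX. k x = i}" by blast
    with refines show "\<exists>k<N. {w \<in> space M. X w \<in> A} \<subseteq> L k" by blast
  qed
qed

lemma sum_partition_indicator_eq:
  fixes v :: "'y set \<Rightarrow> real"
  assumes w: "w \<in> space M" and P: "P \<in> fin_partitions S" and A: "A \<in> P" "Y w \<in> A"
  shows "(\<Sum>B\<in>P. v B * indicator {w \<in> space M. Q w \<and> Y w \<in> B} w) = (if Q w then v A else 0)"
proof -
  have "Y w \<in> space S" using P A by (auto simp: fin_partitions_def)
  then have unique: "B = A" if "B \<in> P" "Y w \<in> B" for B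
    using fin_partitions_ex1_block[OF P] A that by blast
  have "(\<Sum>B\<in>P. v B * indicator {w \<in> space M. Q w \<and> Y w \<in> B} w)
      = (\<Sum>B\<in>P. if B = A then (if Q w then v B else 0) else 0)"
  proof (rule sum.cong)
    fix B assume B: "B \<in> P"
    show "v B * indicator {w \<in> space M. Q w \<and> Y w \<in> B} w
        = (if B = A then (if Q w then v B else 0) else 0)"
    proof (cases "B = A")
      case True
      with A w show ?thesis by (simp add: indicator_def)
    next
      case False
      with unique B have "Y w \<notin> B" by blast
      with False show ?thesis by (simp add: indicator_def)
    qed
  qed simp
  also have "\<dots> = (if Q w then v A else 0)"
    using P A by (simp add: sum.delta' fin_partitions_def)
  finally show ?thesis .
qed

lemma measure_sum_partition:
  assumes "finite_measure M" and P: "P \<in> fin_partitions S" and Y: "Y \<in> M \<rightarrow>\<^sub>M S"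
    and Q: "{w \<in> space M. Q w} \<in> sets M"
  shows "(\<Sum>B\<in>P. measure M {w \<in> space M. Q w \<and> Y w \<in> B}) = measure M {w \<in> space M. Q w}"
proof -
  interpret finite_measure M by fact
  have "{w \<in> space M. Q w} = (\<Union>B\<in>P. {w \<in> space M. Q w \<and> Y w \<in> B})"
    using P measurable_space[OF Y] by (auto simp: fin_partitions_def)
  moreover have "measure M (\<Union>B\<in>P. {w \<in> space M. Q w \<and> Y w \<in> B})
      = (\<Sum>B\<in>P. measure M {w \<in> space M. Q w \<and> Y w \<in> B})"
  proof (rule measure_finite_Union)
    show "(\<lambda>B. {w \<in> space M. Q w \<and> Y w \<in> B}) ` P \<subseteq> sets M"
      using P Q Y by (auto simp: fin_partitions_def intro: sets_Collect_conj_mem)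
    show "disjoint_family_on (\<lambda>B. {w \<in> space M. Q w \<and> Y w \<in> B}) P"
      using P by (auto simp: fin_partitions_def disjoint_family_on_def disjoint_def)
  qed (use P in \<open>auto simp: fin_partitions_def\<close>)
  ultimately show ?thesis by simp
qed

lemma integral_indicator_partition_step_fun:
  fixes V :: "'w \<Rightarrow> real" and v :: "'y set \<Rightarrow> real"
  assumes "finite_measure M" and P: "P \<in> fin_partitions S" and Y: "Y \<in> M \<rightarrow>\<^sub>M S"
    and Q: "{w \<in> space M. Q w} \<in> sets M"
    and V: "\<And>w B. w \<in> space M \<Longrightarrow> B \<in> P \<Longrightarrow> Y w \<in> B \<Longrightarrow> V w = v B"
  shows "(\<integral>w. indicator {w \<in> space M. Q w} w * V w \<partial>M)
       = (\<Sum>B\<in>P. measure M {w \<in> space M. Q w \<and> Y w \<in> B} * v B)"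
proof -
  interpret finite_measure M by fact
  have sets: "{w \<in> space M. Q w \<and> Y w \<in> B} \<in> sets M" if "B \<in> P" for B
    using that P Q Y by (auto simp: fin_partitions_def intro: sets_Collect_conj_mem)
  have "(\<integral>w. indicator {w \<in> space M. Q w} w * V w \<partial>M)
      = (\<integral>w. (\<Sum>B\<in>P. v B * indicator {w \<in> space M. Q w \<and> Y w \<in> B} w) \<partial>M)"
  proof (rule Bochner_Integration.integral_cong[OF refl])
    fix w assume w: "w \<in> space M"
    with Y have Yw: "Y w \<in> space S" by (auto simp: measurable_def)
    then obtain A where A: "A \<in> P" "Y w \<in> A" using P by (auto simp: fin_partitions_def)
    show "indicator {w \<in> space M. Q w} w * V w
        = (\<Sum>B\<in>P. v B * indicator {w \<in> space M. Q w \<and> Y w \<in> B} w)"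
      using sum_partition_indicator_eq[where Y = Y, OF w P A] V[OF w A] w by (simp add: indicator_def)
  qed
  also have "\<dots> = (\<Sum>B\<in>P. measure M {w \<in> space M. Q w \<and> Y w \<in> B} * v B)"
    using sets by (subst Bochner_Integration.integral_sum)
      (auto simp: mult.commute emeasure_eq_measure intro!: integrable_real_indicator)
  finally show ?thesis .
qed

lemma integral_partition_step_fun:
  fixes V :: "'w \<Rightarrow> real" and v :: "'y set \<Rightarrow> real"
  assumes "finite_measure M" and P: "P \<in> fin_partitions S" and Y: "Y \<in> M \<rightarrow>\<^sub>M S"
    and V: "\<And>w B. w \<in> space M \<Longrightarrow> B \<in> P \<Longrightarrow> Y w \<in> B \<Longrightarrow> V w = v B"
  shows "(\<integral>w. V w \<partial>M) = (\<Sum>B\<in>P. measure M {w \<in> space M. Y w \<in> B} * v B)"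
proof -
  have "(\<integral>w. V w \<partial>M) = (\<integral>w. indicator {w \<in> space M. True} w * V w \<partial>M)"
    by (rule Bochner_Integration.integral_cong) auto
  also have "\<dots> = (\<Sum>B\<in>P. measure M {w \<in> space M. True \<and> Y w \<in> B} * v B)"
    by (rule integral_indicator_partition_step_fun[OF assms(1) P Y _ V]) auto
  finally show ?thesis by simp
qed

lemma mutual_info_finite_partitions_le:
  assumes "P \<in> fin_partitions SX" and "Q \<in> fin_partitions SY"
  shows "ereal (mutual_info_finite P Q
            (\<lambda>A B. measure M {w \<in> space M. X w \<in> A \<and> Y w \<in> B})
            (\<lambda>A. measure M {w \<in> space M. X w \<in> A}) (\<lambda>B. measure M {w \<in> space M. Y w \<in> B}))
         \<le> mutual_info M SX X SY Y"
  unfolding mutual_info_def mutual_info_finite_def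
  by (rule SUP_upper2[where i = "(P, Q)"]) (use assms in \<open>auto simp: Let_def\<close>)

lemma mutual_info_nonneg:
  assumes "prob_space M" and X: "X \<in> M \<rightarrow>\<^sub>M SX" and Y: "Y \<in> M \<rightarrow>\<^sub>M SY"
  shows "0 \<le> mutual_info M SX X SY Y"
proof -
  interpret prob_space M by fact
  have "{w \<in> space M. X w \<in> space SX \<and> Y w \<in> space SY} = space M"
    "{w \<in> space M. X w \<in> space SX} = space M" "{w \<in> space M. Y w \<in> space SY} = space M"
    using measurable_space[OF X] measurable_space[OF Y] by auto
  then show ?thesis
    using mutual_info_finite_partitions_le[OF space_in_fin_partitions[of SX] space_in_fin_partitions[of SY],
        where M = M and X = X and Y = Y]
    by (simp add: mutual_info_finite_def prob_space zero_ereal_def)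
qed

lemma partition_cond_mean_variance_le_mutual_info_finite:
  fixes v :: "'y set \<Rightarrow> real"
  assumes "prob_space M" and X: "X \<in> M \<rightarrow>\<^sub>M SX" and Y: "Y \<in> M \<rightarrow>\<^sub>M SY"
    and P: "P \<in> fin_partitions SX" and Q: "Q \<in> fin_partitions SY"
    and v: "\<And>B. B \<in> Q \<Longrightarrow> v B \<in> {lo..lo + c}" and c: "0 < c"
  defines "p \<equiv> \<lambda>A B. measure M {w \<in> space M. X w \<in> A \<and> Y w \<in> B}"
    and "pa \<equiv> \<lambda>A. measure M {w \<in> space M. X w \<in> A}"
    and "pb \<equiv> \<lambda>B. measure M {w \<in> space M. Y w \<in> B}"
  shows "(\<Sum>A\<in>P. pa A * ((\<Sum>B\<in>Q. p A B * v B) / pa A - (\<Sum>B\<in>Q. pb B * v B))\<^sup>2)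
         \<le> c\<^sup>2 / 2 * mutual_info_finite P Q p pa pb"
proof (rule cond_mean_variance_le_mutual_info_finite[OF _ _ _ _ _ _ v c])
  interpret prob_space M by fact
  have sets_X: "{w \<in> space M. X w \<in> A} \<in> sets M" if "A \<in> P" for A
    using P that X by (auto simp: fin_partitions_def intro: sets_Collect_mem)
  have sets_Y: "{w \<in> space M. Y w \<in> B} \<in> sets M" if "B \<in> Q" for B
    using Q that Y by (auto simp: fin_partitions_def intro: sets_Collect_mem)
  show "finite P" "finite Q" using P Q by (simp_all add: fin_partitions_def)
  show "0 \<le> p A B" for A B by (simp add: p_def)
  show "pa A = (\<Sum>B\<in>Q. p A B)" if "A \<in> P" for A
    using measure_sum_partition[OF _ Q Y sets_X[OF that]] by (simp add: p_def pa_def finite_measure_axioms)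
  show "pb B = (\<Sum>A\<in>P. p A B)" if "B \<in> Q" for B
    using measure_sum_partition[OF _ P X sets_Y[OF that]]
    by (simp add: p_def pb_def finite_measure_axioms conj_commute)
  show "(\<Sum>A\<in>P. pa A) = 1"
    using measure_sum_partition[OF _ P X, of "\<lambda>_. True"] by (simp add: pa_def finite_measure_axioms prob_space)
qed

section \<open>Bounded random variables\<close>

lemma (in prob_space) span_rv_AE_in_interval:
  fixes Z :: "'a \<Rightarrow> real"
  assumes "span_rv M Z \<le> ereal K"
  shows "\<exists>lo. AE w in M. Z w \<in> {lo..lo + K}"
proof -
  define s1 where "s1 = esssup M (\<lambda>w. ereal (Z w))"
  define s2 where "s2 = esssup M (\<lambda>w. - ereal (Z w))"
  have AE1: "AE w in M. ereal (Z w) \<le> s1" unfolding s1_def by (rule esssup_AE)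
  have AE2: "AE w in M. - ereal (Z w) \<le> s2" unfolding s2_def by (rule esssup_AE)
  \<comment> \<open>An essential supremum is \<open>-\<infinity>\<close> only on a null space.\<close>
  have "s1 \<noteq> -\<infinity>" using AE1 AE_False by (force elim: eventually_mono)
  moreover have "s2 \<noteq> -\<infinity>" using AE2 AE_False by (force elim: eventually_mono)
  moreover have sum: "s1 + s2 \<le> ereal K" using assms by (simp add: span_rv_def s1_def s2_def)
  ultimately obtain a1 a2 where a: "s1 = ereal a1" "s2 = ereal a2"
    by (cases s1; cases s2) auto
  have "AE w in M. Z w \<in> {- a2..- a2 + K}"
    using AE1 AE2 by eventually_elim (use sum a in auto)
  then show ?thesis by blast
qed

lemma (in prob_space) span_rv_le_imp_nonneg:
  fixes Z :: "'a \<Rightarrow> real"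
  assumes "span_rv M Z \<le> ereal K"
  shows "0 \<le> K"
proof -
  obtain lo where "AE w in M. Z w \<in> {lo..lo + K}" using span_rv_AE_in_interval[OF assms] ..
  then have "AE w in M. 0 \<le> K" by (rule eventually_mono) auto
  then show ?thesis by simp
qed

lemma (in prob_space) integrable_AE_in_interval:
  fixes f :: "'a \<Rightarrow> real"
  assumes "f \<in> borel_measurable M" and "AE x in M. f x \<in> {a..b}"
  shows "integrable M f"
proof -
  interpret interval_bounded_random_variable M f a b
    by unfold_locales (use assms in auto)
  show ?thesis by (rule integrable)
qed

lemma (in prob_space) expectation_AE_in_interval:
  fixes f :: "'a \<Rightarrow> real"
  assumes "f \<in> borel_measurable M" and "AE x in M. f x \<in> {a..b}"
  shows "expectation f \<in> {a..b}"
proof -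
  have f: "integrable M f" using assms by (rule integrable_AE_in_interval)
  have "expectation (\<lambda>_. a) \<le> expectation f"
    by (rule integral_mono_AE) (use f assms(2) in \<open>auto elim: eventually_mono\<close>)
  moreover have "expectation f \<le> expectation (\<lambda>_. b)"
    by (rule integral_mono_AE) (use f assms(2) in \<open>auto elim: eventually_mono\<close>)
  ultimately show ?thesis by (simp add: prob_space)
qed

lemma (in prob_space) abs_expectation_diff_le:
  fixes f g :: "'a \<Rightarrow> real"
  assumes f: "integrable M f" and g: "integrable M g" and near: "AE w in M. \<bar>f w - g w\<bar> \<le> d"
  shows "\<bar>expectation f - expectation g\<bar> \<le> d"
proof -
  have "\<bar>expectation f - expectation g\<bar> = \<bar>expectation (\<lambda>w. f w - g w)\<bar>" using f g by simp
  also have "\<dots> \<le> expectation (\<lambda>w. \<bar>f w - g w\<bar>)" by (rule integral_abs_bound)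
  also have "\<dots> \<le> expectation (\<lambda>_. d)" by (rule integral_mono_AE) (use f g near in auto)
  finally show ?thesis by (simp add: prob_space)
qed

lemma (in prob_space) variance_cong_AE:
  fixes g1 g2 :: "'a \<Rightarrow> real"
  assumes "g1 \<in> borel_measurable M" and "g2 \<in> borel_measurable M" and "AE w in M. g1 w = g2 w"
  shows "variance g1 = variance g2"
proof -
  have "expectation g1 = expectation g2" using assms by (rule integral_cong_AE)
  then show ?thesis
    using assms by (intro integral_cong_AE) (auto elim: eventually_mono)
qed

lemma abs_integral_indicator_le:
  assumes "finite_measure M" and S: "S \<in> sets M" and u: "integrable M u"
    and bound: "AE w in M. w \<in> S \<longrightarrow> \<bar>u w\<bar> \<le> d"
  shows "\<bar>\<integral>w. indicator S w * u w \<partial>M\<bar> \<le> d * measure M S"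
proof -
  interpret finite_measure M by fact
  have "\<bar>\<integral>w. indicator S w * u w \<partial>M\<bar> \<le> (\<integral>w. \<bar>indicator S w * u w\<bar> \<partial>M)"
    by (rule integral_abs_bound)
  also have "\<dots> \<le> (\<integral>w. indicator S w * d \<partial>M)"
  proof (rule integral_mono_AE)
    show "integrable M (\<lambda>w. \<bar>indicator S w * u w\<bar>)"
      using integrable_mult_indicator[OF S u] by (intro integrable_abs) simp
    show "integrable M (\<lambda>w. indicator S w * d)"
      using S by (intro integrable_mult_left integrable_real_indicator) (auto simp: emeasure_eq_measure)
    show "AE w in M. \<bar>indicator S w * u w\<bar> \<le> indicator S w * d"
      using bound by eventually_elim (auto simp: indicator_def abs_mult)
  qed
  also have "\<dots> = d * measure M S" using S by simp
  finally show ?thesis .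
qed

lemma power2_le_power2_add:
  fixes x y :: real
  assumes "\<bar>x\<bar> \<le> c" and "\<bar>x - y\<bar> \<le> e"
  shows "x\<^sup>2 \<le> y\<^sup>2 + e * (2 * c + e)"
proof -
  have "x\<^sup>2 - y\<^sup>2 = (x - y) * (x + y)" by (simp add: power2_eq_square algebra_simps)
  also have "\<dots> \<le> \<bar>x - y\<bar> * \<bar>x + y\<bar>" by (metis abs_ge_self abs_mult)
  also have "\<dots> \<le> e * (2 * c + e)"
    using assms by (intro mult_mono) auto
  finally show ?thesis by simp
qed

lemma (in prob_space) variance_le_step_fun_bound:
  fixes g :: "'a \<Rightarrow> real" and \<beta> :: "'i \<Rightarrow> real"
  assumes g: "g \<in> borel_measurable M" and g_bounds: "AE w in M. g w \<in> {lo..lo + c}"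
    and P: "finite P" and S: "\<And>A. A \<in> P \<Longrightarrow> S A \<in> events"
    and bound: "AE w in M. (g w - expectation g)\<^sup>2 \<le> (\<Sum>A\<in>P. \<beta> A * indicator (S A) w) + K"
  shows "variance g \<le> (\<Sum>A\<in>P. prob (S A) * \<beta> A) + K"
proof -
  have step_int: "integrable M (\<lambda>w. \<Sum>A\<in>P. \<beta> A * indicator (S A) w)"
    using S by (auto simp: emeasure_eq_measure intro!: integrable_real_indicator)
  have "variance g \<le> expectation (\<lambda>w. (\<Sum>A\<in>P. \<beta> A * indicator (S A) w) + K)"
  proof (rule integral_mono_AE[OF _ _ bound])
    have mean: "expectation g \<in> {lo..lo + c}" using g g_bounds by (rule expectation_AE_in_interval)
    have "AE w in M. (g w - expectation g)\<^sup>2 \<in> {0..c\<^sup>2}"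
      using g_bounds by eventually_elim (use mean in \<open>auto intro!: power2_le_iff_abs_le[THEN iffD2]\<close>)
    moreover have "(\<lambda>w. (g w - expectation g)\<^sup>2) \<in> borel_measurable M" using g by measurable
    ultimately show "integrable M (\<lambda>w. (g w - expectation g)\<^sup>2)" by (intro integrable_AE_in_interval)
  qed (use step_int in simp)
  also have "\<dots> = expectation (\<lambda>w. \<Sum>A\<in>P. \<beta> A * indicator (S A) w) + K"
    using step_int by (simp add: prob_space)
  also have "expectation (\<lambda>w. \<Sum>A\<in>P. \<beta> A * indicator (S A) w) = (\<Sum>A\<in>P. prob (S A) * \<beta> A)"
    using S by (subst Bochner_Integration.integral_sum)
      (auto simp: emeasure_eq_measure mult.commute intro!: integrable_real_indicator)
  finally show ?thesis .
qed

lemma cell_mean_close: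
  fixes g h V :: "'w \<Rightarrow> real"
  assumes fin: "finite_measure M" and S: "S \<in> sets M" and pos: "0 < measure M S"
    and g: "integrable M g" and h: "integrable M h" and V: "integrable M V"
    and same_mass: "(\<integral>w. indicator S w * g w \<partial>M) = (\<integral>w. indicator S w * h w \<partial>M)"
    and g_near: "AE w in M. w \<in> S \<longrightarrow> \<bar>g w - t\<bar> \<le> d"
    and V_near: "AE w in M. \<bar>V w - h w\<bar> \<le> d"
  shows "\<bar>(\<integral>w. indicator S w * V w \<partial>M) / measure M S - t\<bar> \<le> 2 * d"
proof -
  interpret finite_measure M by fact
  have int_S: "integrable M (\<lambda>w. indicator S w * u w)" if "integrable M u" for u :: "'w \<Rightarrow> real"
    using integrable_mult_indicator[OF S that] by simp
  have "(\<integral>w. indicator S w * V w \<partial>M) - t * measure M S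
      = (\<integral>w. indicator S w * (V w - h w) \<partial>M) + (\<integral>w. indicator S w * (g w - t) \<partial>M)"
    using same_mass S int_S[OF V] int_S[OF h] int_S[OF g] int_S[OF integrable_const[of t]]
    by (simp add: right_diff_distrib Bochner_Integration.integral_diff)
  also have "\<bar>\<dots>\<bar> \<le> d * measure M S + d * measure M S"
  proof (rule abs_triangle_ineq[THEN order_trans], rule add_mono)
    show "\<bar>\<integral>w. indicator S w * (V w - h w) \<partial>M\<bar> \<le> d * measure M S"
      by (rule abs_integral_indicator_le[OF fin S]) (use V h V_near in \<open>auto elim: eventually_mono\<close>)
    show "\<bar>\<integral>w. indicator S w * (g w - t) \<partial>M\<bar> \<le> d * measure M S"
      by (rule abs_integral_indicator_le[OF fin S]) (use g g_near in auto)
  qed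
  finally have "\<bar>(\<integral>w. indicator S w * V w \<partial>M) - t * measure M S\<bar> \<le> 2 * d * measure M S"
    by simp
  moreover have "(\<integral>w. indicator S w * V w \<partial>M) / measure M S - t
      = ((\<integral>w. indicator S w * V w \<partial>M) - t * measure M S) / measure M S"
    using pos by (simp add: field_simps)
  ultimately show ?thesis
    using pos by (simp add: abs_divide pos_divide_le_eq)
qed

lemma variance_le_partition_cond_means:
  fixes g h V :: "'w \<Rightarrow> real" and X :: "'w \<Rightarrow> 'x"
  assumes "prob_space M" and P: "P \<in> fin_partitions SX" and X: "X \<in> M \<rightarrow>\<^sub>M SX"
    and g: "g \<in> borel_measurable M" and g_bounds: "AE w in M. g w \<in> {lo..lo + c}"
    and h: "h \<in> borel_measurable M" and h_bounds: "AE w in M. h w \<in> {lo..lo + c}"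
    and V: "V \<in> borel_measurable M" and V_near: "AE w in M. \<bar>V w - h w\<bar> \<le> d"
    and same_mass: "\<And>A. A \<in> P \<Longrightarrow>
      (\<integral>w. indicator {w \<in> space M. X w \<in> A} w * g w \<partial>M) = (\<integral>w. indicator {w \<in> space M. X w \<in> A} w * h w \<partial>M)"
    and same_mean: "(\<integral>w. g w \<partial>M) = (\<integral>w. h w \<partial>M)"
    and cells: "\<And>A. A \<in> P \<Longrightarrow> \<exists>t. AE w in M. X w \<in> A \<longrightarrow> \<bar>g w - t\<bar> \<le> d"
  defines "S \<equiv> \<lambda>A. {w \<in> space M. X w \<in> A}"
  shows "prob_space.variance M g
    \<le> (\<Sum>A\<in>P. measure M (S A) * ((\<integral>w. indicator (S A) w * V w \<partial>M) / measure M (S A) - (\<integral>w. V w \<partial>M))\<^sup>2)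
       + 4 * d * (2 * c + 4 * d)"
proof -
  interpret prob_space M by fact
  have S: "S A \<in> events" if "A \<in> P" for A
    using P that X by (auto simp: S_def fin_partitions_def intro: sets_Collect_mem)
  have g_int: "integrable M g" using g g_bounds by (rule integrable_AE_in_interval)
  have h_int: "integrable M h" using h h_bounds by (rule integrable_AE_in_interval)
  have V_bounds: "AE w in M. V w \<in> {lo - d..lo + c + d}" using h_bounds V_near by eventually_elim auto
  have V_int: "integrable M V" using V V_bounds by (rule integrable_AE_in_interval)
  define \<mu> where "\<mu> = expectation g"
  define m where "m = expectation V"
  define a where "a A = (\<integral>w. indicator (S A) w * V w \<partial>M) / measure M (S A)" for A
  have \<mu>: "\<mu> \<in> {lo..lo + c}" unfolding \<mu>_def using g g_bounds by (rule expectation_AE_in_interval)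
  have m_near: "\<bar>m - \<mu>\<bar> \<le> d"
    using abs_expectation_diff_le[OF V_int h_int V_near] same_mean by (simp add: m_def \<mu>_def)
  obtain t where t: "\<And>A. A \<in> P \<Longrightarrow> AE w in M. X w \<in> A \<longrightarrow> \<bar>g w - t A\<bar> \<le> d"
    using cells by metis
  have finite_P: "finite P" using P by (simp add: fin_partitions_def)
  have AE_cells: "AE w in M. \<forall>A\<in>P. (measure M (S A) = 0 \<longrightarrow> w \<notin> S A) \<and> (X w \<in> A \<longrightarrow> \<bar>g w - t A\<bar> \<le> d)"
  proof (rule AE_finite_allI[OF finite_P], rule AE_conjI)
    fix A assume A: "A \<in> P"
    show "AE w in M. measure M (S A) = 0 \<longrightarrow> w \<notin> S A"
      using AE_not_in[of "S A"] S[OF A] by (cases "measure M (S A) = 0") (auto simp: null_sets_def emeasure_eq_measure)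
    show "AE w in M. X w \<in> A \<longrightarrow> \<bar>g w - t A\<bar> \<le> d" using t[OF A] .
  qed
  have pointwise: "AE w in M. (g w - \<mu>)\<^sup>2 \<le> (\<Sum>A\<in>P. (a A - m)\<^sup>2 * indicator (S A) w) + 4 * d * (2 * c + 4 * d)"
    using AE_cells g_bounds AE_space
  proof eventually_elim
    case (elim w)
    then have "X w \<in> space SX" using measurable_space[OF X] by auto
    then obtain A where A: "A \<in> P" "X w \<in> A" using P by (auto simp: fin_partitions_def)
    have "w \<in> S A" using elim(3) A by (simp add: S_def)
    with elim(1) A have "measure M (S A) \<noteq> 0" and g_near: "\<bar>g w - t A\<bar> \<le> d" by auto
    then have pos: "0 < measure M (S A)" using measure_nonneg[of M "S A"] by linarith
    have "\<bar>a A - t A\<bar> \<le> 2 * d"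
      unfolding a_def using same_mass[OF A(1)] t[OF A(1)] V_near
      by (intro cell_mean_close[OF _ S[OF A(1)] pos g_int h_int V_int])
        (auto simp: S_def finite_measure_axioms elim: eventually_mono)
    with g_near m_near have "\<bar>(g w - \<mu>) - (a A - m)\<bar> \<le> 4 * d" by linarith
    with elim(2) \<mu> have "(g w - \<mu>)\<^sup>2 \<le> (a A - m)\<^sup>2 + 4 * d * (2 * c + 4 * d)"
      by (intro power2_le_power2_add) auto
    moreover have "(\<Sum>A\<in>P. (a A - m)\<^sup>2 * indicator (S A) w) = (a A - m)\<^sup>2"
      using sum_partition_indicator_eq[where Y = X and Q = "\<lambda>_. True", OF elim(3) P A]
      by (simp add: S_def)
    ultimately show ?case by simp
  qed
  have "variance g \<le> (\<Sum>A\<in>P. prob (S A) * (a A - m)\<^sup>2) + 4 * d * (2 * c + 4 * d)"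
    by (rule variance_le_step_fun_bound[OF g g_bounds finite_P]) (use S pointwise in \<open>simp_all add: \<mu>_def\<close>)
  then show ?thesis by (simp add: a_def m_def)
qed

section \<open>Grid quantization\<close>

definition grid_index :: "real \<Rightarrow> real \<Rightarrow> real \<Rightarrow> real \<Rightarrow> nat" where
  "grid_index lo c d t = min (nat \<lfloor>c / d\<rfloor>) (nat \<lfloor>(t - lo) / d\<rfloor>)"

lemma grid_index_measurable [measurable]: "grid_index lo c d \<in> borel \<rightarrow>\<^sub>M count_space UNIV"
  unfolding grid_index_def by measurable

lemma grid_index_le: "grid_index lo c d t \<le> nat \<lfloor>c / d\<rfloor>"
  by (simp add: grid_index_def)

lemma grid_point_in_interval:
  assumes "0 < d" and "0 \<le> c"
  shows "lo + d * real (grid_index lo c d t) \<in> {lo..lo + c}"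
proof -
  have "real (grid_index lo c d t) \<le> real (nat \<lfloor>c / d\<rfloor>)"
    using grid_index_le[of lo c d t] by linarith
  also have "\<dots> = of_int \<lfloor>c / d\<rfloor>" using assms by simp
  also have "\<dots> \<le> c / d" by simp
  finally show ?thesis using assms by (simp add: field_simps)
qed

lemma grid_point_near:
  assumes d: "0 < d" and t: "t \<in> {lo..lo + c}"
  shows "\<bar>t - (lo + d * real (grid_index lo c d t))\<bar> \<le> d"
proof -
  have "\<lfloor>(t - lo) / d\<rfloor> \<le> \<lfloor>c / d\<rfloor>"
    using t d by (intro floor_mono divide_right_mono) auto
  then have "grid_index lo c d t = nat \<lfloor>(t - lo) / d\<rfloor>"
    by (simp add: grid_index_def min_absorb2 nat_mono)
  moreover have "0 \<le> \<lfloor>(t - lo) / d\<rfloor>" using t d by simp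
  ultimately have "real (grid_index lo c d t) = of_int \<lfloor>(t - lo) / d\<rfloor>" by simp
  moreover have "d * of_int \<lfloor>(t - lo) / d\<rfloor> \<le> t - lo"
    using mult_left_mono[of "of_int \<lfloor>(t - lo) / d\<rfloor>" "(t - lo) / d" d] d by simp
  moreover have "t - lo < d * of_int \<lfloor>(t - lo) / d\<rfloor> + d"
    using mult_strict_left_mono[of "(t - lo) / d" "of_int \<lfloor>(t - lo) / d\<rfloor> + 1" d] d
    by (simp add: distrib_left)
  ultimately show ?thesis by (simp add: abs_le_iff)
qed

lemma fin_partition_approx_constant:
  fixes g :: "'w \<Rightarrow> real"
  assumes X: "X \<in> M \<rightarrow>\<^sub>M SX" and g: "g \<in> borel_measurable (vimage_algebra (space M) X SX)"
    and g_bounds: "AE w in M. g w \<in> {lo..lo + c}" and d: "0 < d"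
  shows "\<exists>P \<in> fin_partitions SX. \<forall>A\<in>P. \<exists>t. AE w in M. X w \<in> A \<longrightarrow> \<bar>g w - t\<bar> \<le> d"
proof -
  define N where "N = Suc (nat \<lfloor>c / d\<rfloor>)"
  define L where "L k = {w \<in> space M. grid_index lo c d (g w) = k}" for k
  have "L k \<in> sets (vimage_algebra (space M) X SX)" for k
  proof -
    have "{w \<in> space (vimage_algebra (space M) X SX). grid_index lo c d (g w) = k}
        \<in> sets (vimage_algebra (space M) X SX)"
      using g by measurable
    then show ?thesis by (simp add: L_def)
  qed
  moreover have "space M \<subseteq> (\<Union>k<N. L k)"
    using grid_index_le[of lo c d] by (auto simp: L_def N_def less_Suc_eq_le)
  ultimately have "\<exists>P \<in> fin_partitions SX. \<forall>A\<in>P. \<exists>k<N. {w \<in> space M. X w \<in> A} \<subseteq> L k"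
    by (intro fin_partition_refining_vimage[OF X]) (auto simp: N_def)
  then obtain P where P: "P \<in> fin_partitions SX"
    and refines: "\<And>A. A \<in> P \<Longrightarrow> \<exists>k<N. {w \<in> space M. X w \<in> A} \<subseteq> L k"
    by blast
  have "\<exists>t. AE w in M. X w \<in> A \<longrightarrow> \<bar>g w - t\<bar> \<le> d" if A: "A \<in> P" for A
  proof -
    obtain k where k: "{w \<in> space M. X w \<in> A} \<subseteq> L k" using refines[OF A] by blast
    have "AE w in M. X w \<in> A \<longrightarrow> \<bar>g w - (lo + d * real k)\<bar> \<le> d"
      using g_bounds AE_space
    proof eventually_elim
      case (elim w)
      show ?case
      proof
        assume "X w \<in> A"
        with k elim(2) have "grid_index lo c d (g w) = k" by (auto simp: L_def)
        with grid_point_near[OF d elim(1)] show "\<bar>g w - (lo + d * real k)\<bar> \<le> d" by simp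
      qed
    qed
    then show ?thesis by blast
  qed
  with P show ?thesis by blast
qed

lemma fin_partition_step_fun_approx:
  fixes f :: "'y \<Rightarrow> real"
  assumes f: "f \<in> borel_measurable SY" and d: "0 < d" and c: "0 \<le> c"
  shows "\<exists>Q \<in> fin_partitions SY. \<exists>\<phi> \<in> borel_measurable SY. \<exists>v.
           (\<forall>B\<in>Q. \<forall>y\<in>B. \<phi> y = v B) \<and> (\<forall>B. v B \<in> {lo..lo + c}) \<and>
           (\<forall>y. f y \<in> {lo..lo + c} \<longrightarrow> \<bar>\<phi> y - f y\<bar> \<le> d)"
proof -
  define \<kappa> where "\<kappa> y = grid_index lo c d (f y)" for y
  define Q where "Q = (\<lambda>k. {y \<in> space SY. \<kappa> y = k}) ` {..<Suc (nat \<lfloor>c / d\<rfloor>)}"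
  define \<phi> where "\<phi> y = lo + d * real (\<kappa> y)" for y
  define v where "v B = \<phi> (SOME y. y \<in> B)" for B
  have "Q \<in> fin_partitions SY"
    unfolding Q_def using f
    by (intro level_sets_in_fin_partitions) (auto simp: \<kappa>_def grid_index_le less_Suc_eq_le)
  moreover have "\<phi> \<in> borel_measurable SY" unfolding \<phi>_def \<kappa>_def using f by measurable
  moreover have "\<phi> y = v B" if "B \<in> Q" "y \<in> B" for B y
  proof -
    obtain k where B: "B = {y \<in> space SY. \<kappa> y = k}" using \<open>B \<in> Q\<close> by (auto simp: Q_def)
    have "(SOME y. y \<in> B) \<in> B" using \<open>y \<in> B\<close> by (rule someI)
    then show ?thesis using \<open>y \<in> B\<close> by (simp add: B \<phi>_def v_def)
  qed
  moreover have "v B \<in> {lo..lo + c}" for B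
    unfolding v_def \<phi>_def \<kappa>_def using d c by (rule grid_point_in_interval)
  moreover have "\<bar>\<phi> y - f y\<bar> \<le> d" if "f y \<in> {lo..lo + c}" for y
    using grid_point_near[OF d that] by (simp add: \<phi>_def \<kappa>_def abs_minus_commute)
  ultimately show ?thesis by blast
qed

section \<open>Conditional expectations\<close>

lemma subalgebra_vimage_algebra:
  assumes "X \<in> M \<rightarrow>\<^sub>M SX"
  shows "subalgebra M (vimage_algebra (space M) X SX)"
  unfolding subalgebra_def using sets_image_in_sets[OF refl assms] by simp

lemma subalgebra_vimage_algebra_pair:
  assumes X: "X \<in> M \<rightarrow>\<^sub>M SX" and Z: "Z \<in> M \<rightarrow>\<^sub>M SZ"
  shows "subalgebra (vimage_algebra (space M) (\<lambda>w. (X w, Z w)) (SX \<Otimes>\<^sub>M SZ)) (vimage_algebra (space M) X SX)"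
  unfolding subalgebra_def
proof
  have X_space: "X \<in> space M \<rightarrow> space SX" using measurable_space[OF X] by auto
  show "sets (vimage_algebra (space M) X SX) \<subseteq> sets (vimage_algebra (space M) (\<lambda>w. (X w, Z w)) (SX \<Otimes>\<^sub>M SZ))"
  proof
    fix S assume "S \<in> sets (vimage_algebra (space M) X SX)"
    then obtain T where T: "T \<in> sets SX" "S = X -` T \<inter> space M"
      using sets_vimage_algebra2[OF X_space] by auto
    then have "(\<lambda>w. (X w, Z w)) -` (T \<times> space SZ) \<inter> space M \<in> sets (vimage_algebra (space M) (\<lambda>w. (X w, Z w)) (SX \<Otimes>\<^sub>M SZ))"
      by (intro in_vimage_algebra pair_measureI) auto
    moreover have "(\<lambda>w. (X w, Z w)) -` (T \<times> space SZ) \<inter> space M = S"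
      using T measurable_space[OF Z] by auto
    ultimately show "S \<in> sets (vimage_algebra (space M) (\<lambda>w. (X w, Z w)) (SX \<Otimes>\<^sub>M SZ))" by simp
  qed
qed simp

lemma (in sigma_finite_subalgebra) real_cond_exp_AE_in_interval:
  assumes h: "integrable M h" and h_bounds: "AE w in M. h w \<in> {a..b}"
  shows "AE w in M. real_cond_exp M F h w \<in> {a..b}"
proof -
  have "AE w in M. a \<le> real_cond_exp M F h w"
    by (rule real_cond_exp_ge_c[OF h]) (use h_bounds in \<open>auto elim: eventually_mono\<close>)
  moreover have "AE w in M. real_cond_exp M F h w \<le> b"
    by (rule real_cond_exp_le_c[OF h]) (use h_bounds in \<open>auto elim: eventually_mono\<close>)
  ultimately show ?thesis by eventually_elim auto
qed

lemma integral_indicator_real_cond_exp_vimage: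
  fixes h :: "'w \<Rightarrow> real"
  assumes "finite_measure M" and X: "X \<in> M \<rightarrow>\<^sub>M SX" and h: "integrable M h" and A: "A \<in> sets SX"
  shows "(\<integral>w. indicator {w \<in> space M. X w \<in> A} w * real_cond_exp M (vimage_algebra (space M) X SX) h w \<partial>M)
       = (\<integral>w. indicator {w \<in> space M. X w \<in> A} w * h w \<partial>M)"
proof -
  interpret finite_measure M by fact
  interpret finite_measure_subalgebra M "vimage_algebra (space M) X SX"
    by unfold_locales (rule subalgebra_vimage_algebra[OF X])
  have "X -` A \<inter> space M \<in> sets (vimage_algebra (space M) X SX)" by (rule in_vimage_algebra[OF A])
  from real_cond_exp_intA[OF h this]
  have "(\<integral>w. indicator (X -` A \<inter> space M) w * h w \<partial>M)
      = (\<integral>w. indicator (X -` A \<inter> space M) w * real_cond_exp M (vimage_algebra (space M) X SX) h w \<partial>M)"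
    by (simp add: set_lebesgue_integral_def)
  moreover have "X -` A \<inter> space M = {w \<in> space M. X w \<in> A}" by auto
  ultimately show ?thesis by simp
qed

lemma real_cond_exp_vimage_add_centered:
  fixes q z :: "'w \<Rightarrow> real"
  assumes "finite_measure M" and X: "X \<in> M \<rightarrow>\<^sub>M SX" and Z: "Z \<in> M \<rightarrow>\<^sub>M SZ"
    and q: "integrable M q" and z: "integrable M z"
    and z_centered: "AE w in M.
      real_cond_exp M (vimage_algebra (space M) (\<lambda>w. (X w, Z w)) (SX \<Otimes>\<^sub>M SZ)) z w = 0"
  shows "AE w in M. real_cond_exp M (vimage_algebra (space M) X SX) (\<lambda>w. q w + z w) w
                  = real_cond_exp M (vimage_algebra (space M) X SX) q w"
proof -
  interpret finite_measure M by fact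
  define F where "F = vimage_algebra (space M) X SX"
  define G where "G = vimage_algebra (space M) (\<lambda>w. (X w, Z w)) (SX \<Otimes>\<^sub>M SZ)"
  interpret finite_measure_subalgebra M F
    unfolding F_def by unfold_locales (rule subalgebra_vimage_algebra[OF X])
  have G_sub: "subalgebra M G" unfolding G_def using X Z by (intro subalgebra_vimage_algebra) measurable
  have GF: "subalgebra G F" unfolding F_def G_def by (rule subalgebra_vimage_algebra_pair[OF X Z])
  have "AE w in M. real_cond_exp M F (real_cond_exp M G z) w = real_cond_exp M F z w"
    by (rule real_cond_exp_nested_subalg[OF G_sub GF z])
  moreover have "AE w in M. real_cond_exp M F (real_cond_exp M G z) w = real_cond_exp M F (\<lambda>_. 0) w"
    using z_centered by (intro real_cond_exp_cong) (simp_all add: G_def)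
  moreover have "AE w in M. real_cond_exp M F (\<lambda>_. 0) w = 0"
    using real_cond_exp_F_meas[of "\<lambda>_. 0"] by simp
  moreover have "AE w in M. real_cond_exp M F (\<lambda>w. q w + z w) w = real_cond_exp M F q w + real_cond_exp M F z w"
    by (rule real_cond_exp_add[OF q z])
  ultimately show ?thesis unfolding F_def by eventually_elim simp
qed

section \<open>Variance of conditional expectations and mutual information\<close>

lemma variance_cond_exp_le_mutual_info_approx:
  fixes X :: "'w \<Rightarrow> 'x" and Y :: "'w \<Rightarrow> 'y" and f :: "'y \<Rightarrow> real"
  assumes "prob_space M" and X: "X \<in> M \<rightarrow>\<^sub>M SX" and Y: "Y \<in> M \<rightarrow>\<^sub>M SY"
    and f: "f \<in> borel_measurable SY" and f_bounds: "AE w in M. f (Y w) \<in> {lo..lo + c}" and c: "0 < c"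
    and MI: "mutual_info M SX X SY Y \<le> ereal r" and d: "0 < d"
  shows "prob_space.variance M (real_cond_exp M (vimage_algebra (space M) X SX) (\<lambda>w. f (Y w)))
           \<le> c\<^sup>2 / 2 * r + 4 * d * (2 * c + 4 * d)"
proof -
  interpret prob_space M by fact
  define F where "F = vimage_algebra (space M) X SX"
  interpret finite_measure_subalgebra M F
    unfolding F_def by unfold_locales (rule subalgebra_vimage_algebra[OF X])
  define h where "h w = f (Y w)" for w
  define g where "g = real_cond_exp M F h"
  have h_meas: "h \<in> borel_measurable M" unfolding h_def using f Y by measurable
  have h_bounds: "AE w in M. h w \<in> {lo..lo + c}" using f_bounds by (simp add: h_def)
  have h_int: "integrable M h" using h_meas h_bounds by (rule integrable_AE_in_interval)
  have g_bounds: "AE w in M. g w \<in> {lo..lo + c}"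
    unfolding g_def using h_int h_bounds by (rule real_cond_exp_AE_in_interval)
  obtain P where P: "P \<in> fin_partitions SX"
    and cells: "\<And>A. A \<in> P \<Longrightarrow> \<exists>t. AE w in M. X w \<in> A \<longrightarrow> \<bar>g w - t\<bar> \<le> d"
    using fin_partition_approx_constant[OF X _ g_bounds d] unfolding g_def F_def by auto
  obtain Q \<phi> v where Q: "Q \<in> fin_partitions SY" and \<phi>: "\<phi> \<in> borel_measurable SY"
    and \<phi>_block: "\<And>B y. B \<in> Q \<Longrightarrow> y \<in> B \<Longrightarrow> \<phi> y = v B" and v_bounds: "\<And>B. v B \<in> {lo..lo + c}"
    and \<phi>_near: "\<And>y. f y \<in> {lo..lo + c} \<Longrightarrow> \<bar>\<phi> y - f y\<bar> \<le> d"
    using fin_partition_step_fun_approx[OF f d, of c lo] c by force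
  define V where "V w = \<phi> (Y w)" for w
  have V_meas: "V \<in> borel_measurable M" unfolding V_def using \<phi> Y by measurable
  have V_near: "AE w in M. \<bar>V w - h w\<bar> \<le> d"
    using h_bounds by eventually_elim (simp add: V_def h_def \<phi>_near)
  have V_block: "V w = v B" if "B \<in> Q" "Y w \<in> B" for w B
    using \<phi>_block that by (simp add: V_def)
  define p where "p A B = measure M {w \<in> space M. X w \<in> A \<and> Y w \<in> B}" for A B
  define pa where "pa A = measure M {w \<in> space M. X w \<in> A}" for A
  define pb where "pb B = measure M {w \<in> space M. Y w \<in> B}" for B
  have "variance g
      \<le> (\<Sum>A\<in>P. pa A * ((\<integral>w. indicator {w \<in> space M. X w \<in> A} w * V w \<partial>M) / pa A - expectation V)\<^sup>2)
         + 4 * d * (2 * c + 4 * d)"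
    unfolding pa_def
  proof (rule variance_le_partition_cond_means[OF _ P X _ g_bounds h_meas h_bounds V_meas V_near _ _ cells])
    show "(\<integral>w. indicator {w \<in> space M. X w \<in> A} w * g w \<partial>M) = (\<integral>w. indicator {w \<in> space M. X w \<in> A} w * h w \<partial>M)"
      if "A \<in> P" for A
      unfolding g_def F_def using P that
      by (intro integral_indicator_real_cond_exp_vimage[OF _ X h_int]) (auto simp: fin_partitions_def)
    show "expectation g = expectation h" unfolding g_def by (rule real_cond_exp_int(2)[OF h_int])
  qed (auto simp: g_def prob_space_axioms)
  also have "\<dots> = (\<Sum>A\<in>P. pa A * ((\<Sum>B\<in>Q. p A B * v B) / pa A - (\<Sum>B\<in>Q. pb B * v B))\<^sup>2)
      + 4 * d * (2 * c + 4 * d)"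
  proof -
    have "(\<integral>w. indicator {w \<in> space M. X w \<in> A} w * V w \<partial>M) = (\<Sum>B\<in>Q. p A B * v B)" if "A \<in> P" for A
      unfolding p_def using P that X V_block
      by (intro integral_indicator_partition_step_fun[OF _ Q Y])
        (auto simp: finite_measure_axioms fin_partitions_def intro: sets_Collect_mem)
    moreover have "expectation V = (\<Sum>B\<in>Q. pb B * v B)"
      unfolding pb_def using V_block by (intro integral_partition_step_fun[OF _ Q Y]) (auto simp: finite_measure_axioms)
    ultimately show ?thesis by simp
  qed
  also have "\<dots> \<le> c\<^sup>2 / 2 * mutual_info_finite P Q p pa pb + 4 * d * (2 * c + 4 * d)"
    unfolding p_def pa_def pb_def
    using partition_cond_mean_variance_le_mutual_info_finite[OF prob_space_axioms X Y P Q v_bounds c] by simp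
  also have "\<dots> \<le> c\<^sup>2 / 2 * r + 4 * d * (2 * c + 4 * d)"
  proof -
    have "ereal (mutual_info_finite P Q p pa pb) \<le> ereal r"
      unfolding p_def pa_def pb_def using mutual_info_finite_partitions_le[OF P Q] MI by (rule order_trans)
    then show ?thesis by (simp add: mult_left_mono)
  qed
  finally show ?thesis by (simp add: g_def F_def h_def[abs_def])
qed

lemma variance_cond_exp_le_mutual_info:
  fixes X :: "'w \<Rightarrow> 'x" and Y :: "'w \<Rightarrow> 'y" and f :: "'y \<Rightarrow> real"
  assumes "prob_space M" and X: "X \<in> M \<rightarrow>\<^sub>M SX" and Y: "Y \<in> M \<rightarrow>\<^sub>M SY"
    and f: "f \<in> borel_measurable SY" and f_bounds: "AE w in M. f (Y w) \<in> {lo..lo + c}" and c: "0 < c"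
  shows "ereal (2 / c\<^sup>2 * prob_space.variance M
           (real_cond_exp M (vimage_algebra (space M) X SX) (\<lambda>w. f (Y w))))
         \<le> mutual_info M SX X SY Y"
proof (cases "mutual_info M SX X SY Y")
  case (real r)
  define var where "var = prob_space.variance M (real_cond_exp M (vimage_algebra (space M) X SX) (\<lambda>w. f (Y w)))"
  have "var \<le> c\<^sup>2 / 2 * r"
  proof (rule field_le_epsilon)
    fix e :: real assume e: "0 < e"
    define d where "d = min 1 (e / (4 * (2 * c + 4)))"
    have d: "0 < d" "d \<le> 1" "d \<le> e / (4 * (2 * c + 4))" using e c by (auto simp: d_def)
    have "4 * d * (2 * c + 4 * d) \<le> 4 * d * (2 * c + 4)"
      using d by (intro mult_left_mono) auto
    also have "\<dots> \<le> 4 * (e / (4 * (2 * c + 4))) * (2 * c + 4)"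
      using d c by (intro mult_right_mono) auto
    also have "\<dots> = e" using c by (simp add: field_simps)
    finally show "var \<le> c\<^sup>2 / 2 * r + e"
      using variance_cond_exp_le_mutual_info_approx[OF assms real[THEN eq_refl] d(1)]
      unfolding var_def by linarith
  qed
  then have "2 / c\<^sup>2 * var \<le> r" using c by (simp add: field_simps)
  then show ?thesis by (simp add: real var_def)
next
  case MInf
  then show ?thesis using mutual_info_nonneg[OF assms(1) X Y] by simp
qed simp

lemma variance_cond_exp_signal_le_mutual_info:
  fixes X :: "'w \<Rightarrow> 'x" and Z :: "'w \<Rightarrow> 'z" and Y :: "'w \<Rightarrow> 'y" and f :: "'y \<Rightarrow> real"
    and q z :: "'w \<Rightarrow> real"
  assumes "prob_space M" and X: "X \<in> M \<rightarrow>\<^sub>M SX" and Z: "Z \<in> M \<rightarrow>\<^sub>M SZ" and Y: "Y \<in> M \<rightarrow>\<^sub>M SY"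
    and f: "f \<in> borel_measurable SY" and q: "q \<in> borel_measurable M" and z: "z \<in> borel_measurable M"
    and signal_plus_noise: "\<And>w. w \<in> space M \<Longrightarrow> f (Y w) = q w + z w"
    and z_centered: "AE w in M.
      real_cond_exp M (vimage_algebra (space M) (\<lambda>w. (X w, Z w)) (SX \<Otimes>\<^sub>M SZ)) z w = 0"
    and q_span: "span_rv M q \<le> ereal K1" and z_span: "span_rv M z \<le> ereal K2"
  shows "ereal (2 / (K1 + K2)\<^sup>2 *
           prob_space.variance M (real_cond_exp M (vimage_algebra (space M) X SX) q))
         \<le> mutual_info M SX X SY Y"
proof -
  interpret prob_space M by fact
  define F where "F = vimage_algebra (space M) X SX"
  interpret finite_measure_subalgebra M F
    unfolding F_def by unfold_locales (rule subalgebra_vimage_algebra[OF X])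
  obtain lo1 where q_bounds: "AE w in M. q w \<in> {lo1..lo1 + K1}" using span_rv_AE_in_interval[OF q_span] ..
  obtain lo2 where z_bounds: "AE w in M. z w \<in> {lo2..lo2 + K2}" using span_rv_AE_in_interval[OF z_span] ..
  have q_int: "integrable M q" using q q_bounds by (rule integrable_AE_in_interval)
  have z_int: "integrable M z" using z z_bounds by (rule integrable_AE_in_interval)
  have f_bounds: "AE w in M. f (Y w) \<in> {lo1 + lo2..lo1 + lo2 + (K1 + K2)}"
    using q_bounds z_bounds AE_space by eventually_elim (auto simp: signal_plus_noise)
  have "AE w in M. real_cond_exp M F (\<lambda>w. f (Y w)) w = real_cond_exp M F (\<lambda>w. q w + z w) w"
  proof (rule real_cond_exp_cong)
    show "AE w in M. f (Y w) = q w + z w" using AE_space by eventually_elim (simp add: signal_plus_noise)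
    show "(\<lambda>w. f (Y w)) \<in> borel_measurable M" using measurable_compose[OF Y f] by simp
    show "(\<lambda>w. q w + z w) \<in> borel_measurable M" using q z by (rule borel_measurable_add)
  qed
  moreover have "AE w in M. real_cond_exp M F (\<lambda>w. q w + z w) w = real_cond_exp M F q w"
    unfolding F_def by (rule real_cond_exp_vimage_add_centered[OF finite_measure_axioms X Z q_int z_int z_centered])
  ultimately have "variance (real_cond_exp M F q) = variance (real_cond_exp M F (\<lambda>w. f (Y w)))"
    by (intro variance_cong_AE) (auto elim: eventually_elim2)
  moreover have "0 \<le> K1" "0 \<le> K2" using span_rv_le_imp_nonneg q_span z_span by blast+
  \<comment> \<open>If \<open>K1 + K2 = 0\<close>, the left side is \<open>0\<close> because \<open>x / 0 = 0\<close>.\<close>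
  ultimately show ?thesis
    using variance_cond_exp_le_mutual_info[OF prob_space_axioms X Y f f_bounds]
      mutual_info_nonneg[OF prob_space_axioms X Y]
    by (cases "K1 + K2 = 0") (simp_all add: F_def zero_ereal_def)
qed

lemma borel_measurable_vec_nth:
  "(\<lambda>x. x $ i) \<in> borel_measurable (borel :: ('a::topological_space ^ 'n) measure)"
  by (rule borel_measurableI) (simp add: open_vimage_vec_nth)

lemma borel_measurable_vec_nth_index:
  fixes V :: "'w \<Rightarrow> 'b::topological_space ^ 'a::finite"
  assumes V: "V \<in> borel_measurable M" and A: "A \<in> M \<rightarrow>\<^sub>M count_space UNIV"
  shows "(\<lambda>w. V w $ A w) \<in> borel_measurable M"
proof (rule measurable_compose_countable'[where f = "\<lambda>a w. V w $ a" and I = UNIV])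
  show "(\<lambda>w. V w $ a) \<in> borel_measurable M" if "a \<in> UNIV" for a
    using measurable_compose[OF V borel_measurable_vec_nth] by simp
qed (simp_all add: A)

lemma ereal_mean_le:
  assumes "finite I" and "I \<noteq> {}" and le: "\<And>i. i \<in> I \<Longrightarrow> ereal (x i) \<le> m"
  shows "ereal ((\<Sum>i\<in>I. x i) / card I) \<le> m"
proof (cases m)
  case (real r)
  have "(\<Sum>i\<in>I. x i) \<le> (\<Sum>i\<in>I. r)" using le real by (intro sum_mono) auto
  moreover have "0 < card I" using assms(1,2) by (simp add: card_gt_0_iff)
  ultimately show ?thesis by (simp add: real pos_divide_le_eq mult.commute)
next
  case MInf
  with le assms(2) show ?thesis by auto
qed simp

theorem lemma13:
  fixes M :: "'w measure"
    and Pi :: "'w \<Rightarrow> real ^ 'a::finite"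
    and A :: "'w \<Rightarrow> 'a"
    and H :: "'w \<Rightarrow> 'h"
    and Qd :: "'w \<Rightarrow> 'h \<Rightarrow> 'a \<Rightarrow> real ^ 'n::finite"
    and W :: "'w \<Rightarrow> real ^ 'n"
    and M1 M2 :: real
  assumes prob: "prob_space M"
    and Pi_meas: "Pi \<in> borel_measurable M"
    and Pi_dist: "AE w in M. (\<forall>a. 0 \<le> Pi w $ a) \<and> (\<Sum>a\<in>UNIV. Pi w $ a) = 1"
    and A_meas: "A \<in> measurable M (count_space UNIV)"
    and Q_meas: "(\<lambda>w. (\<chi> a. Qd w (H w) a)) \<in> borel_measurable M"
    and W_meas: "W \<in> borel_measurable M"
    and A_indep: "distr M ((borel \<Otimes>\<^sub>M borel) \<Otimes>\<^sub>M count_space UNIV)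
                    (\<lambda>w. ((Pi w, (\<chi> a. Qd w (H w) a)), A w))
                  = distr M (borel \<Otimes>\<^sub>M borel) (\<lambda>w. (Pi w, (\<chi> a. Qd w (H w) a)))
                    \<Otimes>\<^sub>M distr M (count_space UNIV) A"
    and W_zero_mean: "\<And>i. AE w in M.
        real_cond_exp M
          (vimage_algebra (space M) (\<lambda>w. (Pi w, A w, (\<chi> a. Qd w (H w) a)))
             (borel \<Otimes>\<^sub>M count_space UNIV \<Otimes>\<^sub>M borel))
          (\<lambda>w. W w $ i) w = 0"
    and Q_span: "\<And>i. span_rv M (\<lambda>w. Qd w (H w) (A w) $ i) \<le> ereal M1"
    and W_span: "\<And>i. span_rv M (\<lambda>w. W w $ i) \<le> ereal M2"
  shows "mutual_info M borel Pi (count_space UNIV \<Otimes>\<^sub>M borel)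
            (\<lambda>w. (A w, Qd w (H w) (A w) + W w))
         \<ge> ereal (2 / (real CARD('n) * (M1 + M2)\<^sup>2) *
              (\<Sum>i\<in>UNIV. prob_space.variance M
                 (real_cond_exp M (vimage_algebra (space M) Pi borel)
                    (\<lambda>w. Qd w (H w) (A w) $ i))))"
proof -
  define Qv where "Qv w = (\<chi> a. Qd w (H w) a)" for w
  have QA_meas: "(\<lambda>w. Qd w (H w) (A w)) \<in> borel_measurable M"
    using borel_measurable_vec_nth_index[OF Q_meas A_meas] by simp
  have Y: "(\<lambda>w. (A w, Qd w (H w) (A w) + W w)) \<in> M \<rightarrow>\<^sub>M count_space UNIV \<Otimes>\<^sub>M borel"
    using A_meas QA_meas W_meas by measurable
  define MI where "MI = mutual_info M borel Pi (count_space UNIV \<Otimes>\<^sub>M borel) (\<lambda>w. (A w, Qd w (H w) (A w) + W w))"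
  define var where "var i = prob_space.variance M
    (real_cond_exp M (vimage_algebra (space M) Pi borel) (\<lambda>w. Qd w (H w) (A w) $ i))" for i
  have "ereal (2 / (M1 + M2)\<^sup>2 * var i) \<le> MI" for i
    unfolding var_def MI_def
    using W_zero_mean[of i] Q_span[of i] W_span[of i] A_meas Q_meas
      measurable_compose[OF QA_meas borel_measurable_vec_nth] measurable_compose[OF W_meas borel_measurable_vec_nth]
      measurable_compose[OF measurable_snd borel_measurable_vec_nth]
    by (intro variance_cond_exp_signal_le_mutual_info[OF prob Pi_meas _ Y, where f = "\<lambda>y. snd y $ i"
          and Z = "\<lambda>w. (A w, Qv w)"]) (simp_all add: Qv_def)
  then have "ereal ((\<Sum>i\<in>UNIV. 2 / (M1 + M2)\<^sup>2 * var i) / CARD('n)) \<le> MI"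
    by (intro ereal_mean_le) auto
  moreover have "(\<Sum>i\<in>UNIV. 2 / (M1 + M2)\<^sup>2 * var i) / CARD('n)
      = 2 / (CARD('n) * (M1 + M2)\<^sup>2) * (\<Sum>i\<in>UNIV. var i)"
    unfolding sum_distrib_left[symmetric] by (simp add: mult.commute)
  ultimately show ?thesis by (simp add: MI_def var_def)
qed

end
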